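(* Let $G$ be a zero-one reaction network with three species whose dimension ($=\operatorname{rank}$ of its stoichiometric matrix) is $2$, and suppose $G$ is degenerate. Let $G'$ be the network obtained from $G$ by removing all redundant species, and let $h$ be the steady-state system augmented by conservation laws of $G'$. Then every polynomial $f_i$ occurring in $h$ (i.e. $h_i=f_i$ for $i\notin I$) is a sum of exactly two monomials in the concentration variables $x$ (with coefficients in $\mathbb{Q}(\kappa)$, a constant term counting as a monomial); that is, the steady-state system of $G'$ is binomial.
   Context: A reaction network has species $X_1,\dots,X_s$ and reactions $\mu_{1j}X_1+\dots+\mu_{sj}X_s\xrightarrow{\kappa_j}\nu_{1j}X_1+\dots+\nu_{sj}X_s$ ($j=1,\dots,m$) with nonnegative integer coefficients, reactant vector different from product vector, and $\kappa_j>0$. It is zero-one if all $\mu_{ij},\nu_{ij}\in\{0,1\}$. Stoichiometric matrix $\mathcal{N}$: $(i,j)$-entry $\nu_{ij}-\mu_{ij}$; stoichiometric subspace $S$ = column space of $\mathcal{N}$. Mass-action dynamics: $\dot x=f(\kappa,x):=\mathcal{N}v(\kappa,x)$, $v_j=\kappa_j\prod_i x_i^{\mu_{ij}}$, so $f_i\in\mathbb{Q}(\kappa)[x]$. With $d=s-\operatorname{rank}\mathcal{N}$, a conservation-law matrix $W$ is a $d\times s$ row-reduced matrix whose rows form a basis of $S^\perp$; let $I=\{i_1<\dots<i_d\}$ be the column indices of the leading nonzero entries of the rows of $W$. The steady-state system augmented by conservation laws is $h=(h_1,\dots,h_s)$ with $h_i=f_i$ if $i\notin I$ and $h_{i_k}=(Wx-c)_k$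 for $i_k\in I$, $c\in\mathbb{R}^d$. A positive steady state $x^*\in\mathbb{R}^s_{>0}$ for $\kappa^*$ (with $f(\kappa^*,x^* )=0$) is degenerate if $\operatorname{Jac}_f(\kappa^*,x^* )|_S$ does not map onto $S$ (equivalently $\operatorname{Jac}_h$ at $x^*$ is singular). A network is degenerate if it admits positive steady states for some $\kappa$ and all of its positive steady states (for all $\kappa$) are degenerate. A species is redundant if in every reaction it either does not appear or appears on both the reactant and product side; removing it means deleting it from every reaction. *)

theory Defs
  imports "Jordan_Normal_Form.DL_Rank" "Jordan_Normal_Form.Gauss_Jordan_Elimination"
          "HOL-Library.Poly_Mapping"
begin

text \<open>Complexes: stoichiometric coefficient of species i is (c i); species are 0..<n.
  A reaction network is (n, R): n species and the list R of reactions (reactant, product).\<close>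

type_synonym cplx = "nat \<Rightarrow> nat"
type_synonym rnet = "nat \<times> (cplx \<times> cplx) list"

definition nsp :: "rnet \<Rightarrow> nat" where "nsp G = fst G"
definition rxns :: "rnet \<Rightarrow> (cplx \<times> cplx) list" where "rxns G = snd G"

definition wf_rnet :: "rnet \<Rightarrow> bool" where
  "wf_rnet G \<longleftrightarrow> (\<forall>r\<in>set (rxns G).
      (\<forall>i\<ge>nsp G. fst r i = 0 \<and> snd r i = 0) \<and> (\<exists>i<nsp G. fst r i \<noteq> snd r i))"

definition zero_one :: "rnet \<Rightarrow> bool" where
  "zero_one G \<longleftrightarrow> (\<forall>r\<in>set (rxns G). \<forall>i<nsp G. fst r i \<le> 1 \<and> snd r i \<le> 1)"

definition stoich_int :: "rnet \<Rightarrow> nat \<Rightarrow> nat \<Rightarrow> int" where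
  "stoich_int G i j = int (snd (rxns G ! j) i) - int (fst (rxns G ! j) i)"

definition stoich_mat :: "rnet \<Rightarrow> real mat" where
  "stoich_mat G = mat (nsp G) (length (rxns G)) (\<lambda>(i,j). real_of_int (stoich_int G i j))"

definition rank_rnet :: "rnet \<Rightarrow> nat" where
  "rank_rnet G = vec_space.rank (nsp G) (stoich_mat G)"

definition stoich_subspace :: "rnet \<Rightarrow> real vec set" where
  "stoich_subspace G = {stoich_mat G *\<^sub>v c | c. c \<in> carrier_vec (length (rxns G))}"

definition rate :: "rnet \<Rightarrow> (nat \<Rightarrow> real) \<Rightarrow> (nat \<Rightarrow> real) \<Rightarrow> nat \<Rightarrow> real" where
  "rate G \<kappa> x j = \<kappa> j * (\<Prod>l<nsp G. x l ^ fst (rxns G ! j) l)"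

definition ma_f :: "rnet \<Rightarrow> (nat \<Rightarrow> real) \<Rightarrow> (nat \<Rightarrow> real) \<Rightarrow> real vec" where
  "ma_f G \<kappa> x = stoich_mat G *\<^sub>v vec (length (rxns G)) (rate G \<kappa> x)"

definition jac_f :: "rnet \<Rightarrow> (nat \<Rightarrow> real) \<Rightarrow> (nat \<Rightarrow> real) \<Rightarrow> real mat" where
  "jac_f G \<kappa> x = mat (nsp G) (nsp G) (\<lambda>(i,k). \<Sum>j<length (rxns G).
      real_of_int (stoich_int G i j) * \<kappa> j *
      (real (fst (rxns G ! j) k) * x k ^ (fst (rxns G ! j) k - 1) *
       (\<Prod>l\<in>{..<nsp G} - {k}. x l ^ fst (rxns G ! j) l)))"

definition pos_steady_state :: "rnet \<Rightarrow> (nat \<Rightarrow> real) \<Rightarrow> (nat \<Rightarrow> real) \<Rightarrow> bool" where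
  "pos_steady_state G \<kappa> x \<longleftrightarrow> (\<forall>j<length (rxns G). \<kappa> j > 0) \<and> (\<forall>i<nsp G. x i > 0)
      \<and> ma_f G \<kappa> x = 0\<^sub>v (nsp G)"

definition degenerate_ss :: "rnet \<Rightarrow> (nat \<Rightarrow> real) \<Rightarrow> (nat \<Rightarrow> real) \<Rightarrow> bool" where
  "degenerate_ss G \<kappa> x \<longleftrightarrow> (\<lambda>u. jac_f G \<kappa> x *\<^sub>v u) ` stoich_subspace G \<noteq> stoich_subspace G"

definition degenerate_rnet :: "rnet \<Rightarrow> bool" where
  "degenerate_rnet G \<longleftrightarrow> (\<exists>\<kappa> x. pos_steady_state G \<kappa> x)
      \<and> (\<forall>\<kappa> x. pos_steady_state G \<kappa> x \<longrightarrow> degenerate_ss G \<kappa> x)"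

definition redundant :: "rnet \<Rightarrow> nat \<Rightarrow> bool" where
  "redundant G i \<longleftrightarrow> i < nsp G \<and> (\<forall>r\<in>set (rxns G).
      (fst r i = 0 \<and> snd r i = 0) \<or> (fst r i > 0 \<and> snd r i > 0))"

definition remove_redundant :: "rnet \<Rightarrow> rnet" where
  "remove_redundant G =
    (let ks = filter (\<lambda>i. \<not> redundant G i) [0..<nsp G];
         re = (\<lambda>a::cplx. \<lambda>k. if k < length ks then a (ks ! k) else 0)
     in (length ks, map (\<lambda>(a,b). (re a, re b)) (rxns G)))"

definition cons_law_matrix :: "rnet \<Rightarrow> real mat \<Rightarrow> bool" where
  "cons_law_matrix G W \<longleftrightarrow>
    (let n = nsp G; d = nsp G - rank_rnet G;
         Sperp = {w \<in> carrier_vec n. \<forall>v\<in>stoich_subspace G. w \<bullet> v = 0}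
     in W \<in> carrier_mat d n \<and> row_echelon_form W
        \<and> (\<forall>k<d. row W k \<in> Sperp)
        \<and> (\<forall>c\<in>carrier_vec d. transpose_mat W *\<^sub>v c = 0\<^sub>v n \<longrightarrow> c = 0\<^sub>v d)
        \<and> (\<forall>w\<in>Sperp. \<exists>c\<in>carrier_vec d. w = transpose_mat W *\<^sub>v c))"

definition lead_indices :: "real mat \<Rightarrow> nat set" where
  "lead_indices W = {LEAST j. W $$ (k, j) \<noteq> 0 | k. k < dim_row W}"

text \<open>f_i as a formal polynomial in x with coefficients in Q[kappa] (a subring of Q(kappa)):
  monomials in x are exponent vectors nat =>0 nat; coefficients are polynomials in kappa,
  i.e. (nat =>0 nat) =>0 rat. f_i = sum_j N_ij kappa_j x^(mu_j).\<close>
type_synonym qkappa = "(nat \<Rightarrow>\<^sub>0 nat) \<Rightarrow>\<^sub>0 rat"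

definition expo :: "rnet \<Rightarrow> cplx \<Rightarrow> nat \<Rightarrow>\<^sub>0 nat" where
  "expo G a = (\<Sum>l<nsp G. Poly_Mapping.single l (a l))"

definition f_poly :: "rnet \<Rightarrow> nat \<Rightarrow> (nat \<Rightarrow>\<^sub>0 nat) \<Rightarrow>\<^sub>0 qkappa" where
  "f_poly G i = (\<Sum>j<length (rxns G).
      Poly_Mapping.single (expo G (fst (rxns G ! j)))
        (Poly_Mapping.single (Poly_Mapping.single j 1) (of_int (stoich_int G i j))))"

end

theory Submission
  imports Defs
begin

text \<open>The rates \<open>v\<close> at a positive steady state form a positive vector with \<open>N v = 0\<close>, and any such
  \<open>v\<close> is realised at every positive \<open>x\<close> by suitable rate constants; there the Jacobian is
  \<open>N diag(v) \<mu>\<^sup>T diag(1/x)\<close>. A conservation law \<open>w\<close> (a redundant species, or the row of \<open>W\<close>) makes the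
  steady state nondegenerate as soon as the sum of principal \<open>2\<times>2\<close> minors of the Jacobian is
  nonzero. Degeneracy at every \<open>x\<close> therefore forces all principal \<open>2\<times>2\<close> minors of
  \<open>F = N diag(v) \<mu>\<^sup>T\<close> to vanish. In a zero-one network \<open>F\<^sub>p\<^sub>p\<close> is minus the consumption flux of \<open>p\<close>
  and \<open>|F\<^sub>p\<^sub>q|\<close> is at most that flux, so equality holds, which means that every other species is a
  reactant either in all or in none of the reactions producing \<open>p\<close>, and likewise for those
  consuming \<open>p\<close>. Hence \<open>f\<^sub>p\<close> has one monomial from its producing and one from its consuming
  reactions.\<close>

section \<open>Linear algebra in dimension three\<close>

lemma sum_lessThan_3: "(\<Sum>k<(3::nat). f k) = f 0 + f 1 + (f 2 :: 'a::comm_monoid_add)"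
  by (simp add: eval_nat_numeral)

definition det3 :: "(nat \<Rightarrow> nat \<Rightarrow> real) \<Rightarrow> real" where
  "det3 M = M 0 0 * (M 1 1 * M 2 2 - M 1 2 * M 2 1) - M 0 1 * (M 1 0 * M 2 2 - M 1 2 * M 2 0)
          + M 0 2 * (M 1 0 * M 2 1 - M 1 1 * M 2 0)"

definition principal_minors2_sum :: "(nat \<Rightarrow> nat \<Rightarrow> real) \<Rightarrow> real" where
  "principal_minors2_sum M = (M 0 0 * M 1 1 - M 0 1 * M 1 0) + (M 0 0 * M 2 2 - M 0 2 * M 2 0)
                           + (M 1 1 * M 2 2 - M 1 2 * M 2 1)"

lemma principal_minors2_sum_cong:
  assumes "\<And>i k. i < 3 \<Longrightarrow> k < 3 \<Longrightarrow> M i k = M' i k"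
  shows "principal_minors2_sum M = principal_minors2_sum M'"
  using assms by (simp add: principal_minors2_sum_def)

lemma principal_minors2_sum_scale_columns:
  "principal_minors2_sum (\<lambda>i k. M i k * z k)
     = z 0 * z 1 * (M 0 0 * M 1 1 - M 0 1 * M 1 0) + z 0 * z 2 * (M 0 0 * M 2 2 - M 0 2 * M 2 0)
       + z 1 * z 2 * (M 1 1 * M 2 2 - M 1 2 * M 2 1)"
  by (simp add: principal_minors2_sum_def algebra_simps)

lemma det3_nonzero_solvable:
  assumes "det3 M \<noteq> 0"
  shows "\<exists>u. \<forall>i<3. (\<Sum>k<3. M i k * u k) = s i"
proof -
  define u where "u k = det3 (\<lambda>i l. if l = k then s i else M i l) / det3 M" for k
  have "(\<Sum>k<3. M i k * u k) = s i" if "i < 3" for i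
  proof -
    have "i = 0 \<or> i = 1 \<or> i = 2" using that by auto
    then have "(\<Sum>k<3. M i k * det3 (\<lambda>i l. if l = k then s i else M i l)) = s i * det3 M"
      by (elim disjE) (simp_all add: sum_lessThan_3 det3_def algebra_simps)
    then show ?thesis using assms by (simp add: u_def sum_divide_distrib[symmetric] mult.assoc)
  qed
  then show ?thesis by blast
qed

text \<open>\<open>det (M + w w\<^sup>T) = |w|\<^sup>2 e\<^sub>2(M)\<close> when \<open>w\<^sup>T M = 0\<close>, with \<open>M\<close> written out entrywise. The identity
  lies in the ideal generated by the columns of \<open>w\<^sup>T M\<close> only after multiplication by each \<open>w\<^sub>i\<close>;
  the cofactors below are explicit certificates.\<close>
lemma det3_rank_one_update_identity:
  fixes a b c d e f g h i w0 w1 w2 :: real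
  assumes col0: "w0 * a + w1 * d + w2 * g = 0" and col1: "w0 * b + w1 * e + w2 * h = 0"
    and col2: "w0 * c + w1 * f + w2 * i = 0"
  defines "X \<equiv> (a + w0 * w0) * ((e + w1 * w1) * (i + w2 * w2) - (f + w1 * w2) * (h + w2 * w1))
      - (b + w0 * w1) * ((d + w1 * w0) * (i + w2 * w2) - (f + w1 * w2) * (g + w2 * w0))
      + (c + w0 * w2) * ((d + w1 * w0) * (h + w2 * w1) - (e + w1 * w1) * (g + w2 * w0))
      - (w0\<^sup>2 + w1\<^sup>2 + w2\<^sup>2) * ((a * e - b * d) + (a * i - c * g) + (e * i - f * h))"
  shows "w0 * X = 0" "w1 * X = 0" "w2 * X = 0"
proof -
  have "w0 * X = (e*i - f*h - f*w1*w2 - h*w1*w2 - e*w0*w0 - i*w0*w0 - e*w1*w1 - i*w2*w2)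
        * (w0 * a + w1 * d + w2 * g)
      + (- d*i - i*w0*w1 + f*g + f*w0*w2 + g*w1*w2 + d*w0*w0 + d*w1*w1) * (w0 * b + w1 * e + w2 * h)
      + (d*h + d*w1*w2 + h*w0*w1 - e*g - e*w0*w2 + g*w0*w0 + g*w2*w2) * (w0 * c + w1 * f + w2 * i)"
    unfolding X_def by (simp add: algebra_simps power2_eq_square)
  then show "w0 * X = 0" using col0 col1 col2 by simp
  have "w1 * X = (c*h + c*w1*w2 + h*w0*w2 - b*i - i*w0*w1 + b*w0*w0 + b*w1*w1)
        * (w0 * a + w1 * d + w2 * g)
      + (a*i - c*g - c*w0*w2 - g*w0*w2 - a*w0*w0 - a*w1*w1 - i*w1*w1 - i*w2*w2)
        * (w0 * b + w1 * e + w2 * h)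
      + (- a*h - a*w1*w2 + b*g + b*w0*w2 + g*w0*w1 + h*w1*w1 + h*w2*w2) * (w0 * c + w1 * f + w2 * i)"
    unfolding X_def by (simp add: algebra_simps power2_eq_square)
  then show "w1 * X = 0" using col0 col1 col2 by simp
  have "w2 * X = (- c*e - e*w0*w2 + b*f + b*w1*w2 + f*w0*w1 + c*w0*w0 + c*w2*w2)
        * (w0 * a + w1 * d + w2 * g)
      + (- a*f - a*w1*w2 + c*d + c*w0*w1 + d*w0*w2 + f*w1*w1 + f*w2*w2) * (w0 * b + w1 * e + w2 * h)
      + (a*e - b*d - b*w0*w1 - d*w0*w1 - a*w0*w0 - e*w1*w1 - a*w2*w2 - e*w2*w2)
        * (w0 * c + w1 * f + w2 * i)"
    unfolding X_def by (simp add: algebra_simps power2_eq_square)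
  then show "w2 * X = 0" using col0 col1 col2 by simp
qed

lemma det3_add_rank_one:
  assumes wM: "\<forall>k<3. (\<Sum>i<3. w i * M i k) = 0" and w: "\<exists>i<3. w i \<noteq> 0"
  shows "det3 (\<lambda>i k. M i k + w i * w k) = (\<Sum>i<3. w i ^ 2) * principal_minors2_sum M"
proof -
  let ?D = "det3 (\<lambda>i k. M i k + w i * w k) - (\<Sum>i<3. w i ^ 2) * principal_minors2_sum M"
  have "w 0 * M 0 k + w 1 * M 1 k + w 2 * M 2 k = 0" if "k < 3" for k
    using wM that by (simp add: sum_lessThan_3)
  then have cols: "w 0 * M 0 0 + w 1 * M 1 0 + w 2 * M 2 0 = 0"
    "w 0 * M 0 1 + w 1 * M 1 1 + w 2 * M 2 1 = 0" "w 0 * M 0 2 + w 1 * M 1 2 + w 2 * M 2 2 = 0"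
    by simp_all
  have "w 0 * ?D = 0" "w 1 * ?D = 0" "w 2 * ?D = 0"
    unfolding det3_def principal_minors2_sum_def sum_lessThan_3
    by (rule det3_rank_one_update_identity[OF cols])+
  moreover obtain k where "k < 3" "w k \<noteq> 0" using w by blast
  moreover have "k = 0 \<or> k = 1 \<or> k = 2" using \<open>k < 3\<close> by auto
  ultimately have "w k * ?D = 0" "w k \<noteq> 0" by auto
  then have "?D = 0" by (simp only: mult_eq_0_iff) blast
  then show ?thesis by (simp only: right_minus_eq)
qed

text \<open>Adding \<open>w w\<^sup>T\<close> makes \<open>M\<close> invertible; since \<open>w\<^sup>T M = 0\<close> and \<open>w\<^sup>T s = 0\<close>, the solution of
  \<open>(M + w w\<^sup>T) u = s\<close> lies in \<open>w\<^sup>\<bottom>\<close>, where \<open>M\<close> and \<open>M + w w\<^sup>T\<close> agree.\<close>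
lemma perp_solvable_if_principal_minors2_sum_nonzero:
  fixes M :: "nat \<Rightarrow> nat \<Rightarrow> real" and w s :: "nat \<Rightarrow> real"
  assumes wM: "\<forall>k<3. (\<Sum>i<3. w i * M i k) = 0" and w: "\<exists>i<3. w i \<noteq> 0"
    and e2: "principal_minors2_sum M \<noteq> 0" and ws: "(\<Sum>i<3. w i * s i) = 0"
  shows "\<exists>u. (\<Sum>k<3. w k * u k) = 0 \<and> (\<forall>i<3. (\<Sum>k<3. M i k * u k) = s i)"
proof -
  obtain i0 where "i0 < 3" "w i0 \<noteq> 0" using w by blast
  then have norm_pos: "(\<Sum>i<3. w i ^ 2) > 0"
    using sum_pos2[of "{..<3}" i0 "\<lambda>i. w i ^ 2"] by simp
  then have "det3 (\<lambda>i k. M i k + w i * w k) \<noteq> 0"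
    using det3_add_rank_one[OF wM w] e2 by simp
  then obtain u where u: "\<forall>i<3. (\<Sum>k<3. (M i k + w i * w k) * u k) = s i"
    using det3_nonzero_solvable by blast
  have split: "(\<Sum>k<3. (M i k + w i * w k) * u k) = (\<Sum>k<3. M i k * u k) + w i * (\<Sum>k<3. w k * u k)"
    for i by (simp add: distrib_right sum.distrib sum_distrib_left mult.assoc)
  have "0 = (\<Sum>i<3. w i * (\<Sum>k<3. (M i k + w i * w k) * u k))" using ws u by simp
  also have "\<dots> = (\<Sum>k<3. (\<Sum>i<3. w i * M i k) * u k) + (\<Sum>i<3. w i ^ 2) * (\<Sum>k<3. w k * u k)"
    by (simp add: sum_lessThan_3 algebra_simps power2_eq_square)
  also have "\<dots> = (\<Sum>i<3. w i ^ 2) * (\<Sum>k<3. w k * u k)" using wM by simp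
  finally have wu: "(\<Sum>k<3. w k * u k) = 0" using norm_pos by simp
  moreover have "(\<Sum>k<3. M i k * u k) = s i" if "i < 3" for i
    using u that split[of i] wu by simp
  ultimately show ?thesis by blast
qed

section \<open>Steady states and Jacobians of mass-action systems\<close>

lemma stoich_mat_mult_vec_nth:
  assumes "i < nsp G" "c \<in> carrier_vec (length (rxns G))"
  shows "(stoich_mat G *\<^sub>v c) $ i = (\<Sum>j<length (rxns G). real_of_int (stoich_int G i j) * c $ j)"
  using assms by (simp add: stoich_mat_def scalar_prod_def atLeast0LessThan)

lemma ma_f_nth:
  assumes "i < nsp G"
  shows "ma_f G \<kappa> x $ i = (\<Sum>j<length (rxns G). real_of_int (stoich_int G i j) * rate G \<kappa> x j)"
  using assms by (simp add: ma_f_def stoich_mat_mult_vec_nth)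

lemma stoich_subspace_carrier: "stoich_subspace G \<subseteq> carrier_vec (nsp G)"
  by (auto simp: stoich_subspace_def stoich_mat_def intro!: carrier_vecI)

lemma jac_f_mult_vec_in_stoich_subspace:
  assumes u: "u \<in> carrier_vec (nsp G)"
  shows "jac_f G \<kappa> x *\<^sub>v u \<in> stoich_subspace G"
proof -
  let ?m = "length (rxns G)"
  define T where "T j k = \<kappa> j * (real (fst (rxns G ! j) k) * x k ^ (fst (rxns G ! j) k - 1) *
      (\<Prod>l\<in>{..<nsp G} - {k}. x l ^ fst (rxns G ! j) l))" for j k
  define c where "c = vec ?m (\<lambda>j. \<Sum>k<nsp G. T j k * u $ k)"
  have "jac_f G \<kappa> x *\<^sub>v u = stoich_mat G *\<^sub>v c"
  proof (rule eq_vecI)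
    fix i assume "i < dim_vec (stoich_mat G *\<^sub>v c)"
    then have i: "i < nsp G" by (simp add: stoich_mat_def)
    have "(jac_f G \<kappa> x *\<^sub>v u) $ i = (\<Sum>k<nsp G. jac_f G \<kappa> x $$ (i, k) * u $ k)"
      using i u by (simp add: jac_f_def scalar_prod_def atLeast0LessThan)
    also have "\<dots> = (\<Sum>k<nsp G. \<Sum>j<?m. real_of_int (stoich_int G i j) * (T j k * u $ k))"
      using i by (intro sum.cong refl) (simp add: jac_f_def T_def sum_distrib_right mult.assoc)
    also have "\<dots> = (\<Sum>j<?m. \<Sum>k<nsp G. real_of_int (stoich_int G i j) * (T j k * u $ k))"
      by (rule sum.swap)
    also have "\<dots> = (\<Sum>j<?m. real_of_int (stoich_int G i j) * (\<Sum>k<nsp G. T j k * u $ k))"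
      by (simp add: sum_distrib_left)
    also have "\<dots> = (stoich_mat G *\<^sub>v c) $ i"
      using i by (simp add: stoich_mat_mult_vec_nth c_def)
    finally show "(jac_f G \<kappa> x *\<^sub>v u) $ i = (stoich_mat G *\<^sub>v c) $ i" .
  qed (simp add: jac_f_def stoich_mat_def)
  then show ?thesis unfolding stoich_subspace_def c_def by auto
qed

lemma conservation_vector_orthogonal:
  assumes wN: "\<forall>j<length (rxns G). (\<Sum>i<nsp G. w i * real_of_int (stoich_int G i j)) = 0"
    and s: "s \<in> stoich_subspace G"
  shows "(\<Sum>i<nsp G. w i * s $ i) = 0"
proof -
  obtain c where c: "c \<in> carrier_vec (length (rxns G))" "s = stoich_mat G *\<^sub>v c"
    using s unfolding stoich_subspace_def by blast
  have "(\<Sum>i<nsp G. w i * s $ i)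
      = (\<Sum>i<nsp G. \<Sum>j<length (rxns G). w i * real_of_int (stoich_int G i j) * c $ j)"
    using c by (intro sum.cong refl) (simp add: stoich_mat_mult_vec_nth sum_distrib_left mult.assoc)
  also have "\<dots> = (\<Sum>j<length (rxns G). \<Sum>i<nsp G. w i * real_of_int (stoich_int G i j) * c $ j)"
    by (rule sum.swap)
  also have "\<dots> = (\<Sum>j<length (rxns G). (\<Sum>i<nsp G. w i * real_of_int (stoich_int G i j)) * c $ j)"
    by (simp add: sum_distrib_right)
  also have "\<dots> = 0" using wN by simp
  finally show ?thesis .
qed

lemma not_degenerate_ss_if_principal_minors2_sum_nonzero:
  assumes G3: "nsp G = 3" and w: "\<exists>i<3. w i \<noteq> 0"
    and wN: "\<forall>j<length (rxns G). (\<Sum>i<3. w i * real_of_int (stoich_int G i j)) = 0"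
    and e2: "principal_minors2_sum (\<lambda>i k. jac_f G \<kappa> x $$ (i, k)) \<noteq> 0"
  shows "\<not> degenerate_ss G \<kappa> x"
proof -
  let ?J = "jac_f G \<kappa> x" and ?S = "stoich_subspace G"
  have J: "?J \<in> carrier_mat 3 3" using G3 by (simp add: jac_f_def)
  have Jv: "(?J *\<^sub>v vec 3 u) $ i = (\<Sum>k<3. ?J $$ (i, k) * u k)" if "i < 3" for i u
    using J that by (simp add: scalar_prod_def atLeast0LessThan)
  have Scar: "?S \<subseteq> carrier_vec 3" using stoich_subspace_carrier[of G] G3 by simp
  have JS: "?J *\<^sub>v v \<in> ?S" if "v \<in> carrier_vec 3" for v
    using jac_f_mult_vec_in_stoich_subspace G3 that by simp
  have wS: "(\<Sum>i<3. w i * s $ i) = 0" if "s \<in> ?S" for s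
    using conservation_vector_orthogonal[of G w s] G3 wN that by simp
  have wJ: "\<forall>k<3. (\<Sum>i<3. w i * ?J $$ (i, k)) = 0"
  proof (intro allI impI)
    fix k :: nat assume k: "k < 3"
    have "(?J *\<^sub>v unit_vec 3 k) $ i = ?J $$ (i, k)" if "i < 3" for i
      using J k that by simp
    then show "(\<Sum>i<3. w i * ?J $$ (i, k)) = 0"
      using wS[OF JS[of "unit_vec 3 k"]] by simp
  qed
  have onto: "\<exists>u. (\<Sum>k<3. w k * u k) = 0 \<and> ?J *\<^sub>v vec 3 u = s"
    if s: "s \<in> carrier_vec 3" "(\<Sum>i<3. w i * s $ i) = 0" for s
  proof -
    obtain u where u: "(\<Sum>k<3. w k * u k) = 0" "\<forall>i<3. (\<Sum>k<3. ?J $$ (i, k) * u k) = s $ i"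
      using perp_solvable_if_principal_minors2_sum_nonzero[OF wJ w e2 s(2)] by blast
    have "?J *\<^sub>v vec 3 u = s"
      by (rule eq_vecI) (use J s u Jv in auto)
    with u show ?thesis by blast
  qed
  \<comment> \<open>The image of the Jacobian lies in \<open>S \<subseteq> w\<^sup>\<bottom>\<close> and it maps \<open>w\<^sup>\<bottom>\<close> onto itself, so \<open>S = w\<^sup>\<bottom>\<close> is mapped onto \<open>S\<close>.\<close>
  have "?S \<subseteq> (\<lambda>u. ?J *\<^sub>v u) ` ?S"
  proof
    fix s assume s: "s \<in> ?S"
    obtain u where u: "(\<Sum>k<3. w k * u k) = 0" "?J *\<^sub>v vec 3 u = s"
      using onto wS[OF s] s Scar by blast
    obtain u' where "?J *\<^sub>v vec 3 u' = vec 3 u"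
      using onto[of "vec 3 u"] u(1) by auto
    then have "vec 3 u \<in> ?S" using JS[of "vec 3 u'"] by simp
    with u(2) show "s \<in> (\<lambda>u. ?J *\<^sub>v u) ` ?S" by blast
  qed
  moreover have "(\<lambda>u. ?J *\<^sub>v u) ` ?S \<subseteq> ?S"
    using JS Scar by blast
  ultimately show ?thesis unfolding degenerate_ss_def by blast
qed

lemma monomial_partial_derivative:
  fixes x :: "nat \<Rightarrow> real"
  assumes "k < n" "x k > 0"
  shows "real (e k) * x k ^ (e k - 1) * (\<Prod>l\<in>{..<n} - {k}. x l ^ e l)
       = real (e k) * (\<Prod>l<n. x l ^ e l) / x k"
proof (cases "e k")
  case (Suc d)
  have "(\<Prod>l<n. x l ^ e l) = x k ^ e k * (\<Prod>l\<in>{..<n} - {k}. x l ^ e l)"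
    using assms(1) by (simp add: prod.remove)
  then show ?thesis using Suc assms(2) by simp
qed simp

definition flux_matrix :: "rnet \<Rightarrow> (nat \<Rightarrow> real) \<Rightarrow> nat \<Rightarrow> nat \<Rightarrow> real" where
  "flux_matrix G v i k =
     (\<Sum>j<length (rxns G). real_of_int (stoich_int G i j) * v j * real (fst (rxns G ! j) k))"

lemma pos_steady_state_rates:
  assumes "pos_steady_state G \<kappa> x"
  shows "\<forall>j<length (rxns G). rate G \<kappa> x j > 0"
    and "\<forall>i<nsp G. (\<Sum>j<length (rxns G). real_of_int (stoich_int G i j) * rate G \<kappa> x j) = 0"
proof -
  show "\<forall>j<length (rxns G). rate G \<kappa> x j > 0"
    using assms by (auto simp: pos_steady_state_def rate_def intro!: mult_pos_pos prod_pos)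
  have "ma_f G \<kappa> x $ i = 0" if "i < nsp G" for i
    using assms that by (simp add: pos_steady_state_def)
  then show "\<forall>i<nsp G. (\<Sum>j<length (rxns G). real_of_int (stoich_int G i j) * rate G \<kappa> x j) = 0"
    by (simp add: ma_f_nth)
qed

text \<open>Any positive flux vector \<open>v\<close> in the kernel of \<open>N\<close> is realised at any positive \<open>x\<close> by
  \<open>\<kappa>\<^sub>j = v\<^sub>j / x\<^sup>\<mu>\<^sup>\<^sub>j\<close>, and then \<open>Jac\<^sub>f = N diag(v) \<mu>\<^sup>T diag(1/x)\<close>.\<close>
lemma pos_steady_state_with_rates:
  fixes v x :: "nat \<Rightarrow> real"
  assumes v: "\<forall>j<length (rxns G). v j > 0"
    and ker: "\<forall>i<nsp G. (\<Sum>j<length (rxns G). real_of_int (stoich_int G i j) * v j) = 0"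
    and x: "\<forall>k<nsp G. x k > 0"
  obtains \<kappa> where "pos_steady_state G \<kappa> x"
    and "\<And>i k. i < nsp G \<Longrightarrow> k < nsp G \<Longrightarrow> jac_f G \<kappa> x $$ (i, k) = flux_matrix G v i k / x k"
proof -
  define P where "P j = (\<Prod>l<nsp G. x l ^ fst (rxns G ! j) l)" for j
  define \<kappa> where "\<kappa> j = v j / P j" for j
  have P: "P j > 0" for j
    using x unfolding P_def by (intro prod_pos) auto
  then have P_nonzero: "P j \<noteq> 0" for j by (metis less_irrefl)
  have rate: "rate G \<kappa> x j = v j" for j
    using P[of j] by (simp add: rate_def P_def[symmetric] \<kappa>_def)
  have "ma_f G \<kappa> x = 0\<^sub>v (nsp G)"
  proof (rule eq_vecI)
    fix i assume "i < dim_vec (0\<^sub>v (nsp G) :: real vec)"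
    then show "ma_f G \<kappa> x $ i = 0\<^sub>v (nsp G) $ i" using ker by (simp add: ma_f_nth rate)
  qed (simp add: ma_f_def stoich_mat_def)
  then have "pos_steady_state G \<kappa> x"
    unfolding pos_steady_state_def using v x P by (simp add: \<kappa>_def)
  moreover have "jac_f G \<kappa> x $$ (i, k) = flux_matrix G v i k / x k"
    if i: "i < nsp G" and k: "k < nsp G" for i k
  proof -
    have "jac_f G \<kappa> x $$ (i, k) = (\<Sum>j<length (rxns G). real_of_int (stoich_int G i j) * \<kappa> j *
        (real (fst (rxns G ! j) k) * x k ^ (fst (rxns G ! j) k - 1) *
         (\<Prod>l\<in>{..<nsp G} - {k}. x l ^ fst (rxns G ! j) l)))"
      using i k by (simp add: jac_f_def)
    also have "\<dots> = (\<Sum>j<length (rxns G).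
        real_of_int (stoich_int G i j) * \<kappa> j * (real (fst (rxns G ! j) k) * P j / x k))"
      unfolding P_def
      by (rule sum.cong[OF refl]) (subst monomial_partial_derivative[OF k], use x k in auto)
    also have "\<dots> = (\<Sum>j<length (rxns G).
        real_of_int (stoich_int G i j) * v j * real (fst (rxns G ! j) k) / x k)"
      by (intro sum.cong refl) (simp add: \<kappa>_def P_nonzero)
    also have "\<dots> = flux_matrix G v i k / x k"
      by (simp add: flux_matrix_def sum_divide_distrib)
    finally show ?thesis .
  qed
  ultimately show ?thesis using that by blast
qed

lemma flux_principal_minors_vanish:
  assumes G3: "nsp G = 3"
    and deg: "\<forall>\<kappa> x. pos_steady_state G \<kappa> x \<longrightarrow> degenerate_ss G \<kappa> x"
    and v: "\<forall>j<length (rxns G). v j > 0"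
    and ker: "\<forall>i<3. (\<Sum>j<length (rxns G). real_of_int (stoich_int G i j) * v j) = 0"
    and w: "\<exists>i<3. w i \<noteq> 0"
    and wN: "\<forall>j<length (rxns G). (\<Sum>i<3. w i * real_of_int (stoich_int G i j)) = 0"
    and pq: "p < 3" "q < 3"
  shows "flux_matrix G v p p * flux_matrix G v q q = flux_matrix G v p q * flux_matrix G v q p"
proof -
  define c where "c p q = flux_matrix G v p p * flux_matrix G v q q - flux_matrix G v p q * flux_matrix G v q p"
    for p q
  \<comment> \<open>At \<open>x = (1/a, 1/b, 1/d)\<close> the sum of principal \<open>2\<times>2\<close> minors of the Jacobian is this form.\<close>
  have form: "a * b * c 0 1 + a * d * c 0 2 + b * d * c 1 2 = 0" if "a > 0" "b > 0" "d > 0" for a b d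
  proof -
    define z :: "nat \<Rightarrow> real" where "z k = (if k = 0 then a else if k = 1 then b else d)" for k
    have z: "\<forall>k<nsp G. 1 / z k > 0" using that by (simp add: z_def)
    obtain \<kappa> where ss: "pos_steady_state G \<kappa> (\<lambda>k. 1 / z k)"
      and J: "\<And>i k. i < 3 \<Longrightarrow> k < 3 \<Longrightarrow>
                jac_f G \<kappa> (\<lambda>k. 1 / z k) $$ (i, k) = flux_matrix G v i k * z k"
      using pos_steady_state_with_rates[OF v ker[folded G3] z] G3 by auto
    have "principal_minors2_sum (\<lambda>i k. jac_f G \<kappa> (\<lambda>k. 1 / z k) $$ (i, k)) = 0"
      using not_degenerate_ss_if_principal_minors2_sum_nonzero[OF G3 w wN] deg ss by blast
    moreover have "principal_minors2_sum (\<lambda>i k. jac_f G \<kappa> (\<lambda>k. 1 / z k) $$ (i, k))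
        = principal_minors2_sum (\<lambda>i k. flux_matrix G v i k * z k)"
      using J by (rule principal_minors2_sum_cong)
    moreover have "\<dots> = a * b * c 0 1 + a * d * c 0 2 + b * d * c 1 2"
      by (simp add: principal_minors2_sum_scale_columns z_def c_def)
    ultimately show ?thesis by simp
  qed
  have "c 0 1 = 0" "c 0 2 = 0" "c 1 2 = 0"
    using form[of 1 1 1] form[of 2 1 1] form[of 1 2 1] by simp_all
  moreover have "c q p = c p q" for p q by (simp add: c_def mult.commute)
  moreover have "c p p = 0" for p by (simp add: c_def)
  moreover have "p \<in> {0, 1, 2}" "q \<in> {0, 1, 2}" using pq by auto
  ultimately have "c p q = 0" by auto
  then show ?thesis by (simp add: c_def)
qed

lemma abs_eq_if_mult_eq_bounds:
  fixes a b c d :: real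
  assumes ab: "a * b = c * d" and a: "\<bar>a\<bar> \<le> c" and b: "\<bar>b\<bar> \<le> d" and cd: "0 < c" "0 < d"
  shows "\<bar>a\<bar> = c"
proof (rule ccontr)
  assume "\<bar>a\<bar> \<noteq> c"
  with a have "\<bar>a\<bar> < c" by simp
  have "c * d = \<bar>a\<bar> * \<bar>b\<bar>" using ab cd by (simp add: abs_mult[symmetric])
  also have "\<dots> \<le> \<bar>a\<bar> * d" using b by (simp add: mult_left_mono)
  also have "\<dots> < c * d" using \<open>\<bar>a\<bar> < c\<close> cd by simp
  finally show False by simp
qed

lemma sum_mult_unit_interval:
  fixes v a :: "'a \<Rightarrow> real"
  assumes "finite J" and unit: "\<forall>j\<in>J. 0 < v j \<and> 0 \<le> a j \<and> a j \<le> 1"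
  shows "0 \<le> (\<Sum>j\<in>J. v j * a j)"
    and "(\<Sum>j\<in>J. v j * a j) \<le> (\<Sum>j\<in>J. v j)"
    and "(\<Sum>j\<in>J. v j * a j) = 0 \<longleftrightarrow> (\<forall>j\<in>J. a j = 0)"
    and "(\<Sum>j\<in>J. v j * a j) = (\<Sum>j\<in>J. v j) \<longleftrightarrow> (\<forall>j\<in>J. a j = 1)"
proof -
  show "0 \<le> (\<Sum>j\<in>J. v j * a j)" using unit by (intro sum_nonneg) auto
  show "(\<Sum>j\<in>J. v j * a j) \<le> (\<Sum>j\<in>J. v j)" using unit by (intro sum_mono) (simp add: mult_left_le)
  have nonzero: "v j \<noteq> 0" if "j \<in> J" for j using unit that by force
  have "(\<Sum>j\<in>J. v j * a j) = 0 \<longleftrightarrow> (\<forall>j\<in>J. v j * a j = 0)"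
    using assms by (intro sum_nonneg_eq_0_iff) auto
  also have "\<dots> \<longleftrightarrow> (\<forall>j\<in>J. a j = 0)" using nonzero by (intro ball_cong) auto
  finally show "(\<Sum>j\<in>J. v j * a j) = 0 \<longleftrightarrow> (\<forall>j\<in>J. a j = 0)" .
  have "(\<Sum>j\<in>J. v j * (1 - a j)) = (\<Sum>j\<in>J. v j) - (\<Sum>j\<in>J. v j * a j)"
    by (simp add: right_diff_distrib sum_subtractf)
  then have "(\<Sum>j\<in>J. v j * a j) = (\<Sum>j\<in>J. v j) \<longleftrightarrow> (\<Sum>j\<in>J. v j * (1 - a j)) = 0"
    by (intro iffI) linarith+
  also have "\<dots> \<longleftrightarrow> (\<forall>j\<in>J. v j * (1 - a j) = 0)"
    using assms by (intro sum_nonneg_eq_0_iff) auto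
  also have "\<dots> \<longleftrightarrow> (\<forall>j\<in>J. a j = 1)" using nonzero by (intro ball_cong) auto
  finally show "(\<Sum>j\<in>J. v j * a j) = (\<Sum>j\<in>J. v j) \<longleftrightarrow> (\<forall>j\<in>J. a j = 1)" .
qed

section \<open>Reduced networks, conservation laws and the polynomials \<open>f\<^sub>i\<close>\<close>

lemma nonredundant_stoich_nonzero:
  assumes "i < nsp G" "\<not> redundant G i"
  shows "\<exists>j<length (rxns G). stoich_int G i j \<noteq> 0"
proof -
  obtain r where "r \<in> set (rxns G)" "\<not> (fst r i = 0 \<and> snd r i = 0 \<or> fst r i > 0 \<and> snd r i > 0)"
    using assms unfolding redundant_def by auto
  then obtain j where "j < length (rxns G)" "stoich_int G i j \<noteq> 0"
    by (metis in_set_conv_nth stoich_int_def of_nat_eq_iff eq_iff_diff_eq_0 gr0I)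
  then show ?thesis by blast
qed

definition nonredundant_species :: "rnet \<Rightarrow> nat list" where
  "nonredundant_species G = filter (\<lambda>i. \<not> redundant G i) [0..<nsp G]"

definition restrict_complex :: "rnet \<Rightarrow> cplx \<Rightarrow> cplx" where
  "restrict_complex G a k =
     (if k < length (nonredundant_species G) then a (nonredundant_species G ! k) else 0)"

lemma remove_redundant_eq:
  "remove_redundant G = (length (nonredundant_species G),
     map (\<lambda>(a, b). (restrict_complex G a, restrict_complex G b)) (rxns G))"
  unfolding remove_redundant_def Let_def nonredundant_species_def restrict_complex_def[abs_def]
  by (rule refl)

lemma nsp_remove_redundant: "nsp (remove_redundant G) = length (nonredundant_species G)"
  by (simp add: remove_redundant_eq nsp_def)

lemma length_rxns_remove_redundant: "length (rxns (remove_redundant G)) = length (rxns G)"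
  by (simp add: remove_redundant_eq rxns_def)

lemma rxns_remove_redundant_nth:
  "j < length (rxns G) \<Longrightarrow> rxns (remove_redundant G) ! j
     = (restrict_complex G (fst (rxns G ! j)), restrict_complex G (snd (rxns G ! j)))"
  by (simp add: remove_redundant_eq rxns_def case_prod_beta)

lemma nonredundant_species_nth:
  assumes "l < length (nonredundant_species G)"
  shows "nonredundant_species G ! l < nsp G" "\<not> redundant G (nonredundant_species G ! l)"
  using nth_mem[OF assms] by (auto simp: nonredundant_species_def)

lemma stoich_int_remove_redundant:
  assumes "i < nsp (remove_redundant G)" "j < length (rxns G)"
  shows "stoich_int (remove_redundant G) i j = stoich_int G (nonredundant_species G ! i) j"
  using assms by (simp add: stoich_int_def rxns_remove_redundant_nth nsp_remove_redundant
      restrict_complex_def)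

lemma lookup_expo: "Poly_Mapping.lookup (expo G a) l = (if l < nsp G then a l else 0)"
  by (simp add: expo_def Poly_Mapping.lookup_sum Poly_Mapping.lookup_single when_def)

lemma lookup_expo_restrict_complex:
  "Poly_Mapping.lookup (expo (remove_redundant G) (restrict_complex G a)) l
     = (if l < length (nonredundant_species G) then a (nonredundant_species G ! l) else 0)"
  by (simp add: lookup_expo nsp_remove_redundant restrict_complex_def)

lemma remove_redundant_id:
  assumes wf: "wf_rnet G" and "\<forall>i<nsp G. \<not> redundant G i"
  shows "remove_redundant G = G"
proof -
  have species: "nonredundant_species G = [0..<nsp G]"
    using assms(2) by (simp add: nonredundant_species_def filter_True)
  have "restrict_complex G a = a" if "\<forall>i\<ge>nsp G. a i = 0" for a
    using that by (auto simp: restrict_complex_def species)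
  then have "map (\<lambda>(a, b). (restrict_complex G a, restrict_complex G b)) (rxns G) = rxns G"
    using wf by (intro map_idI) (auto simp: wf_rnet_def)
  then show ?thesis
    by (simp add: remove_redundant_eq species nsp_def rxns_def)
qed

lemma keys_f_poly:
  "Poly_Mapping.keys (f_poly G i)
     = (\<lambda>j. expo G (fst (rxns G ! j))) ` {j. j < length (rxns G) \<and> stoich_int G i j \<noteq> 0}"
proof
  show "Poly_Mapping.keys (f_poly G i)
      \<subseteq> (\<lambda>j. expo G (fst (rxns G ! j))) ` {j. j < length (rxns G) \<and> stoich_int G i j \<noteq> 0}"
  proof -
    have single_eq_0: "Poly_Mapping.single k c = 0 \<longleftrightarrow> c = 0" for k and c :: rat
      by (metis lookup_single_eq single_zero)
    have "Poly_Mapping.keys (f_poly G i) \<subseteq> (\<Union>j<length (rxns G). Poly_Mapping.keys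
        (Poly_Mapping.single (expo G (fst (rxns G ! j)))
          (Poly_Mapping.single (Poly_Mapping.single j (1::nat)) (of_int (stoich_int G i j) :: rat))))"
      unfolding f_poly_def by (rule keys_sum)
    also have "\<dots> \<subseteq> (\<lambda>j. expo G (fst (rxns G ! j))) ` {j. j < length (rxns G) \<and> stoich_int G i j \<noteq> 0}"
      by (auto simp: single_eq_0)
    finally show ?thesis .
  qed
  \<comment> \<open>No cancellation: the coefficient of reaction \<open>j\<close> is the monomial \<open>N\<^sub>i\<^sub>j \<kappa>\<^sub>j\<close>.\<close>
  have coeff: "Poly_Mapping.lookup (Poly_Mapping.lookup (f_poly G i) (expo G (fst (rxns G ! j))))
      (Poly_Mapping.single j 1) = of_int (stoich_int G i j)" if j: "j < length (rxns G)" for j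
  proof -
    have single_eq: "x = j" if "Poly_Mapping.single x (1::nat) = Poly_Mapping.single j 1" for x
      using that by (metis lookup_single_eq lookup_single_not_eq zero_neq_one)
    have "Poly_Mapping.lookup (Poly_Mapping.lookup (Poly_Mapping.single (expo G (fst (rxns G ! x)))
          (Poly_Mapping.single (Poly_Mapping.single x (1::nat)) (of_int (stoich_int G i x) :: rat)))
          (expo G (fst (rxns G ! j)))) (Poly_Mapping.single j 1)
        = (if x = j then of_int (stoich_int G i j) else 0)" for x
    proof (cases "x = j")
      case False
      then have ne: "Poly_Mapping.single x (1::nat) \<noteq> Poly_Mapping.single j 1"
        using single_eq by blast
      with False show ?thesis
        by (cases "expo G (fst (rxns G ! x)) = expo G (fst (rxns G ! j))")
          (simp_all add: lookup_single_not_eq)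
    qed simp
    then show ?thesis
      using j by (simp add: f_poly_def Poly_Mapping.lookup_sum)
  qed
  show "(\<lambda>j. expo G (fst (rxns G ! j))) ` {j. j < length (rxns G) \<and> stoich_int G i j \<noteq> 0}
      \<subseteq> Poly_Mapping.keys (f_poly G i)"
  proof
    fix e assume "e \<in> (\<lambda>j. expo G (fst (rxns G ! j))) ` {j. j < length (rxns G) \<and> stoich_int G i j \<noteq> 0}"
    then obtain j where "j < length (rxns G)" "stoich_int G i j \<noteq> 0" "e = expo G (fst (rxns G ! j))"
      by blast
    with coeff have "Poly_Mapping.lookup (f_poly G i) e \<noteq> 0" by force
    then show "e \<in> Poly_Mapping.keys (f_poly G i)" by (simp add: in_keys_iff)
  qed
qed

lemma cons_law_matrix_conservation_vector:
  assumes W: "cons_law_matrix G W" and rk: "rank_rnet G < nsp G"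
  shows "\<exists>w. (\<exists>i<nsp G. w i \<noteq> 0)
           \<and> (\<forall>j<length (rxns G). (\<Sum>i<nsp G. w i * real_of_int (stoich_int G i j)) = 0)"
proof -
  define d where "d = nsp G - rank_rnet G"
  have d: "0 < d" using rk by (simp add: d_def)
  have Wc: "W \<in> carrier_mat d (nsp G)"
    and row0: "\<forall>s\<in>stoich_subspace G. row W 0 \<bullet> s = 0"
    and inj: "\<forall>c\<in>carrier_vec d. transpose_mat W *\<^sub>v c = 0\<^sub>v (nsp G) \<longrightarrow> c = 0\<^sub>v d"
    using W d unfolding cons_law_matrix_def Let_def d_def by auto
  define w where "w i = W $$ (0, i)" for i
  have "(\<Sum>i<nsp G. w i * real_of_int (stoich_int G i j)) = 0" if j: "j < length (rxns G)" for j
  proof -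
    let ?s = "stoich_mat G *\<^sub>v unit_vec (length (rxns G)) j"
    have "?s \<in> stoich_subspace G" unfolding stoich_subspace_def by auto
    moreover have "?s $ i = real_of_int (stoich_int G i j)" if "i < nsp G" for i
      using that j by (simp add: stoich_mat_def)
    then have "row W 0 \<bullet> ?s = (\<Sum>i<nsp G. w i * real_of_int (stoich_int G i j))"
      using Wc d by (simp add: scalar_prod_def atLeast0LessThan w_def stoich_mat_def)
    ultimately show ?thesis using row0 by simp
  qed
  moreover have "\<exists>i<nsp G. w i \<noteq> 0"
  proof (rule ccontr)
    assume "\<not> (\<exists>i<nsp G. w i \<noteq> 0)"
    then have "transpose_mat W *\<^sub>v unit_vec d 0 = 0\<^sub>v (nsp G)"
      using Wc d by (intro eq_vecI) (simp_all add: w_def)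
    then have "unit_vec d 0 = (0\<^sub>v d :: real vec)" using inj by simp
    then show False using d by (metis index_unit_vec(2) index_zero_vec(1) zero_neq_one)
  qed
  ultimately show ?thesis by blast
qed

section \<open>Zero-one networks\<close>

locale zero_one_network =
  fixes G :: rnet
  assumes zero_one: "zero_one G"
begin

abbreviation "m \<equiv> length (rxns G)"
abbreviation "reac j \<equiv> fst (rxns G ! j)"
abbreviation "N i j \<equiv> stoich_int G i j"

definition producing :: "nat \<Rightarrow> nat set" where
  "producing i = {j \<in> {..<m}. N i j = 1}"

definition consuming :: "nat \<Rightarrow> nat set" where
  "consuming i = {j \<in> {..<m}. N i j = -1}"

lemma reactant_le_1: "j < m \<Longrightarrow> i < nsp G \<Longrightarrow> reac j i \<le> 1"
  using zero_one nth_mem unfolding zero_one_def by blast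

lemma stoich_cases:
  assumes "j < m" "i < nsp G"
  shows "j \<in> producing i \<and> reac j i = 0 \<or> j \<in> consuming i \<and> reac j i = 1 \<or> N i j = 0"
proof -
  have "snd (rxns G ! j) i \<le> 1" "reac j i \<le> 1"
    using zero_one assms nth_mem unfolding zero_one_def by blast+
  then show ?thesis
    using assms by (auto simp: producing_def consuming_def stoich_int_def le_Suc_eq)
qed

lemma redundant_stoich_zero:
  assumes "redundant G i" "j < m"
  shows "N i j = 0"
proof -
  have "rxns G ! j \<in> set (rxns G)" using assms(2) by simp
  then have "reac j i = 0 \<and> snd (rxns G ! j) i = 0 \<or> 0 < reac j i \<and> 0 < snd (rxns G ! j) i"
    using assms(1) unfolding redundant_def by blast
  moreover have "reac j i \<le> 1" "snd (rxns G ! j) i \<le> 1"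
    using zero_one assms nth_mem unfolding zero_one_def redundant_def by blast+
  ultimately have "snd (rxns G ! j) i = reac j i" by linarith
  then show ?thesis by (simp add: stoich_int_def)
qed

lemma stoich_sum_split:
  assumes "i < nsp G"
  shows "(\<Sum>j<m. real_of_int (N i j) * f j) = (\<Sum>j\<in>producing i. f j) - (\<Sum>j\<in>consuming i. f j)"
proof -
  have "(\<Sum>j<m. real_of_int (N i j) * f j)
      = (\<Sum>j<m. (if N i j = 1 then f j else 0) - (if N i j = -1 then f j else 0))"
    using stoich_cases assms by (intro sum.cong refl) (force simp: producing_def consuming_def)
  also have "\<dots> = (\<Sum>j\<in>producing i. f j) - (\<Sum>j\<in>consuming i. f j)"
    unfolding producing_def consuming_def
    by (simp only: sum_subtractf sum.inter_filter[OF finite_lessThan])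
  finally show ?thesis .
qed

lemma flux_matrix_eq:
  assumes "i < nsp G"
  shows "flux_matrix G v i k
    = (\<Sum>j\<in>producing i. v j * real (reac j k)) - (\<Sum>j\<in>consuming i. v j * real (reac j k))"
  using stoich_sum_split[OF assms, of "\<lambda>j. v j * real (reac j k)"]
  by (simp add: flux_matrix_def mult.assoc)

lemma flux_matrix_diag:
  assumes "i < nsp G"
  shows "flux_matrix G v i i = - (\<Sum>j\<in>consuming i. v j)"
proof -
  have "reac j i = 0" if "j \<in> producing i" for j
    using that stoich_cases[of j i] assms by (auto simp: producing_def consuming_def)
  moreover have "reac j i = 1" if "j \<in> consuming i" for j
    using that stoich_cases[of j i] assms by (auto simp: producing_def consuming_def)
  ultimately show ?thesis by (simp add: flux_matrix_eq[OF assms])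
qed

lemma produced_and_consumed:
  assumes v: "\<forall>j<m. v j > 0" and ker: "(\<Sum>j<m. real_of_int (N i j) * v j) = 0"
    and i: "i < nsp G" "\<not> redundant G i"
  shows "producing i \<noteq> {}" "consuming i \<noteq> {}"
proof -
  have pos: "(\<Sum>j\<in>A. v j) > 0 \<longleftrightarrow> A \<noteq> {}" if "A \<subseteq> {..<m}" for A
    using v that finite_subset[OF that] by (auto intro!: sum_pos)
  have balance: "(\<Sum>j\<in>producing i. v j) = (\<Sum>j\<in>consuming i. v j)"
    using ker stoich_sum_split[OF i(1)] by simp
  obtain j where "j < m" "N i j \<noteq> 0" using nonredundant_stoich_nonzero[OF i] by blast
  then have "producing i \<noteq> {} \<or> consuming i \<noteq> {}"
    using i(1) stoich_cases[of j i] by auto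
  moreover have "producing i \<subseteq> {..<m}" "consuming i \<subseteq> {..<m}"
    by (auto simp: producing_def consuming_def)
  ultimately show "producing i \<noteq> {}" "consuming i \<noteq> {}"
    using pos balance by metis+
qed

text \<open>With \<open>D\<^sub>p\<close> the consumption flux of \<open>p\<close>: \<open>F\<^sub>p\<^sub>p = -D\<^sub>p\<close> and \<open>|F\<^sub>p\<^sub>q| \<le> D\<^sub>p\<close>, so a vanishing
  minor forces \<open>|F\<^sub>p\<^sub>q| = D\<^sub>p\<close>, which is attained only in the two configurations below.\<close>
lemma reactant_uniform_if_flux_minor_vanishes:
  assumes v: "\<forall>j<m. v j > 0"
    and ker: "\<forall>i<nsp G. (\<Sum>j<m. real_of_int (N i j) * v j) = 0"
    and p: "p < nsp G" "\<not> redundant G p" and q: "q < nsp G" "\<not> redundant G q"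
    and minor: "flux_matrix G v p p * flux_matrix G v q q = flux_matrix G v p q * flux_matrix G v q p"
  shows "(\<forall>j\<in>producing p. reac j q = 1) \<and> (\<forall>j\<in>consuming p. reac j q = 0)
       \<or> (\<forall>j\<in>producing p. reac j q = 0) \<and> (\<forall>j\<in>consuming p. reac j q = 1)"
proof -
  define D where "D i = (\<Sum>j\<in>consuming i. v j)" for i
  have finite: "finite (producing i)" "finite (consuming i)" for i
    by (simp_all add: producing_def consuming_def)
  have unit: "\<forall>j\<in>A. 0 < v j \<and> 0 \<le> real (reac j k) \<and> real (reac j k) \<le> 1"
    if "A \<subseteq> {..<m}" "k < nsp G" for A k
    using that v reactant_le_1 by force
  have sub: "producing i \<subseteq> {..<m}" "consuming i \<subseteq> {..<m}" for i
    by (auto simp: producing_def consuming_def)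
  note prod_bounds = sum_mult_unit_interval[OF finite(1) unit[OF sub(1)]]
  note cons_bounds = sum_mult_unit_interval[OF finite(2) unit[OF sub(2)]]
  have balance: "(\<Sum>j\<in>producing i. v j) = D i" if "i < nsp G" for i
    using ker that stoich_sum_split[OF that, of v] by (simp add: D_def)
  have D_pos: "D i > 0" if "i < nsp G" "\<not> redundant G i" for i
    using produced_and_consumed[OF v ker[rule_format, OF that(1)] that] v finite(2)
    by (auto simp: D_def consuming_def intro!: sum_pos)
  have bound: "\<bar>flux_matrix G v i k\<bar> \<le> D i" if "i < nsp G" "k < nsp G" for i k
    using prod_bounds(1,2)[OF that(2), of i] cons_bounds(1,2)[OF that(2), of i] balance[OF that(1)]
    by (simp add: flux_matrix_eq[OF that(1)] D_def abs_le_iff)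
  have "flux_matrix G v p q * flux_matrix G v q p = D p * D q"
    using minor by (simp add: flux_matrix_diag p(1) q(1) D_def)
  then have "\<bar>flux_matrix G v p q\<bar> = D p"
    using abs_eq_if_mult_eq_bounds bound p q D_pos by blast
  then consider "flux_matrix G v p q = D p" | "flux_matrix G v p q = - D p" by linarith
  then show ?thesis
  proof cases
    case 1
    then show ?thesis
      using prod_bounds(1-4)[OF q(1), of p] cons_bounds(1-4)[OF q(1), of p] balance[OF p(1)]
      by (simp add: flux_matrix_eq[OF p(1)] D_def)
  next
    case 2
    then show ?thesis
      using prod_bounds(1-4)[OF q(1), of p] cons_bounds(1-4)[OF q(1), of p] balance[OF p(1)]
      by (simp add: flux_matrix_eq[OF p(1)] D_def)
  qed
qed

lemma reactant_agree_if_flux_minors_vanish: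
  assumes v: "\<forall>j<m. v j > 0"
    and ker: "\<forall>i<nsp G. (\<Sum>j<m. real_of_int (N i j) * v j) = 0"
    and minors: "\<forall>p<nsp G. \<forall>q<nsp G.
       flux_matrix G v p p * flux_matrix G v q q = flux_matrix G v p q * flux_matrix G v q p"
    and p: "p < nsp G" "\<not> redundant G p" and q: "q < nsp G" "\<not> redundant G q"
    and jj': "j \<in> producing p \<and> j' \<in> producing p \<or> j \<in> consuming p \<and> j' \<in> consuming p"
  shows "reac j q = reac j' q"
  using reactant_uniform_if_flux_minor_vanishes[OF v ker p q] minors p q jj' by fastforce

lemma card_keys_f_poly_remove_redundant:
  assumes v: "\<forall>j<m. v j > 0"
    and ker: "\<forall>i<nsp G. (\<Sum>j<m. real_of_int (N i j) * v j) = 0"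
    and minors: "\<forall>p<nsp G. \<forall>q<nsp G.
       flux_matrix G v p p * flux_matrix G v q q = flux_matrix G v p q * flux_matrix G v q p"
    and i: "i < nsp (remove_redundant G)"
  shows "card (Poly_Mapping.keys (f_poly (remove_redundant G) i)) = 2"
proof -
  let ?ks = "nonredundant_species G" and ?G' = "remove_redundant G"
  let ?E = "\<lambda>j. expo ?G' (restrict_complex G (reac j))"
  define p where "p = ?ks ! i"
  have i': "i < length ?ks" using i by (simp add: nsp_remove_redundant)
  have p: "p < nsp G" "\<not> redundant G p" using nonredundant_species_nth[OF i'] by (simp_all add: p_def)
  have keys: "Poly_Mapping.keys (f_poly ?G' i) = ?E ` (producing p \<union> consuming p)"
  proof -
    have reactions: "{j. j < length (rxns ?G') \<and> stoich_int ?G' i j \<noteq> 0} = producing p \<union> consuming p"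
      using p(1) stoich_cases[of _ p]
      by (force simp: length_rxns_remove_redundant stoich_int_remove_redundant[OF i]
          p_def[symmetric] producing_def consuming_def)
    have "Poly_Mapping.keys (f_poly ?G' i)
        = (\<lambda>j. expo ?G' (fst (rxns ?G' ! j))) ` (producing p \<union> consuming p)"
      by (simp add: keys_f_poly reactions)
    also have "\<dots> = ?E ` (producing p \<union> consuming p)"
      by (rule image_cong) (auto simp: rxns_remove_redundant_nth producing_def consuming_def)
    finally show ?thesis .
  qed
  have agree: "?E j = ?E j'"
    if "j \<in> producing p \<and> j' \<in> producing p \<or> j \<in> consuming p \<and> j' \<in> consuming p" for j j'
    using reactant_agree_if_flux_minors_vanish[OF v ker minors p _ _ that]
      nonredundant_species_nth
    by (intro poly_mapping_eqI) (simp add: lookup_expo_restrict_complex)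
  obtain j1 j2 where j1: "j1 \<in> producing p" and j2: "j2 \<in> consuming p"
    using produced_and_consumed[OF v ker[rule_format, OF p(1)] p] by blast
  have "?E ` (producing p \<union> consuming p) = {?E j1, ?E j2}"
    using agree j1 j2 by blast
  moreover have "reac j1 p = 0" "reac j2 p = 1"
    using j1 j2 p(1) stoich_cases[of j1 p] stoich_cases[of j2 p]
    by (auto simp: producing_def consuming_def)
  then have "Poly_Mapping.lookup (?E j1) i \<noteq> Poly_Mapping.lookup (?E j2) i"
    using i' by (simp add: lookup_expo_restrict_complex p_def)
  then have "?E j1 \<noteq> ?E j2" by metis
  ultimately show ?thesis by (simp add: keys)
qed


lemma conservation_vector_exists:
  assumes wf: "wf_rnet G" and rk: "rank_rnet G < nsp G"
    and W: "cons_law_matrix (remove_redundant G) W"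
  shows "\<exists>w. (\<exists>i<nsp G. w i \<noteq> 0) \<and> (\<forall>j<m. (\<Sum>i<nsp G. w i * real_of_int (N i j)) = 0)"
proof (cases "\<exists>r<nsp G. redundant G r")
  case True
  then obtain r where r: "r < nsp G" "redundant G r" by blast
  have "(\<Sum>i<nsp G. (if i = r then 1 else 0) * real_of_int (N i j)) = 0" if "j < m" for j
    using r redundant_stoich_zero[OF r(2) that] by (simp add: if_distrib cong: if_cong)
  then show ?thesis using r(1) by (intro exI[of _ "\<lambda>i. if i = r then 1 else 0"]) auto
next
  case False
  then have "remove_redundant G = G" using remove_redundant_id[OF wf] by blast
  with W rk show ?thesis using cons_law_matrix_conservation_vector by simp
qed

end

theorem theorem2:
  fixes G :: rnet
  assumes "wf_rnet G" and "zero_one G" and "nsp G = 3" and "rank_rnet G = 2"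
    and "degenerate_rnet G"
  shows "\<forall>W. cons_law_matrix (remove_redundant G) W \<longrightarrow>
           (\<forall>i < nsp (remove_redundant G). i \<notin> lead_indices W \<longrightarrow>
              card (Poly_Mapping.keys (f_poly (remove_redundant G) i)) = 2)"
proof (intro allI impI)
  \<comment> \<open>Every \<open>f\<^sub>i\<close> of the reduced network is binomial, whether or not \<open>i\<close> is a pivot column of \<open>W\<close>.\<close>
  fix W i assume W: "cons_law_matrix (remove_redundant G) W" and i: "i < nsp (remove_redundant G)"
  interpret zero_one_network G by unfold_locales (rule assms(2))
  obtain \<kappa> x where ss: "pos_steady_state G \<kappa> x"
    and deg: "\<forall>\<kappa> x. pos_steady_state G \<kappa> x \<longrightarrow> degenerate_ss G \<kappa> x"
    using assms(5) unfolding degenerate_rnet_def by blast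
  note v = pos_steady_state_rates(1)[OF ss] and ker = pos_steady_state_rates(2)[OF ss]
  obtain w where w: "\<exists>i<3. w i \<noteq> 0" and wN: "\<forall>j<m. (\<Sum>i<3. w i * real_of_int (N i j)) = 0"
    using conservation_vector_exists[OF assms(1) _ W] assms(3,4) by auto
  have "\<forall>p<nsp G. \<forall>q<nsp G. flux_matrix G (rate G \<kappa> x) p p * flux_matrix G (rate G \<kappa> x) q q
      = flux_matrix G (rate G \<kappa> x) p q * flux_matrix G (rate G \<kappa> x) q p"
    unfolding assms(3) using flux_principal_minors_vanish[OF assms(3) deg v ker[unfolded assms(3)] w wN]
    by blast
  then show "card (Poly_Mapping.keys (f_poly (remove_redundant G) i)) = 2"
    using card_keys_f_poly_remove_redundant[OF v ker _ i] by blast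
qed

end
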